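(* Let $G$ be a convergence group and $\tau(G)$ its locally quasi-convex modification. Then $\Gamma G$ and $\Gamma\tau(G)$ have the same equicontinuous subsets. That is, a set $H$ of characters is an equicontinuous subset of $\Gamma G$ if and only if it is an equicontinuous subset of $\Gamma\tau(G)$.
   Context: All groups are abelian. A convergence group is an abelian group with a convergence structure (an assignment to each point $x$ of a collection of filters converging to $x$). This assignment must satisfy three conditions: point ultrafilters converge to their point; finite intersections of filters converging to $x$ converge to $x$; and finer filters converge. The group operation must be compatible: $\mathcal F\to x$, $\mathcal G\to y$ imply $\mathcal F-\mathcal G\to x-y$. Topological groups are convergence groups. $\mathbb T=\mathbb R/\mathbb Z$, $\mathbb T_+=\rho([-1/4,1/4])$ where $\rho:\mathbb R\to\mathbb T$ is the quotient map. $\Gamma G$ is the group of continuous homomorphisms $G\to\mathbb T$. A set $M\subseteq\Gamma G$ is equicontinuous if for every filter $\mathcal F\to0$ in $G$, the filter generated by $\{\varphi(x):\varphi\in M,x\in F\}$, $F\in\mathcal F$, converges to $0$ in $\mathbb T$. A subset $A$ of a topological group $G$ is quasi-convex if for every $x\notin A$ there is a continuous character $\varphi$ with $\varphi(A)\subseteq\mathbb T_+$ and $\varphi(x)\notin\mathbb T_+$. A topological group is locally quasi-convex if it has a zero neighbourhood base of quasi-convex sets. The locally quasi-convex modification $\tau(G)$ of a convergence group $G$ is the finest locally quasi-convex group topology on $G$ coarser than the convergence structure of $G$, i.e. such that the identity $G\to\tau(G)$ is continuous. *)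

theory Defs
  imports "HOL-Analysis.Analysis"
begin

text \<open>We model T = R/Z as the unit circle of the complex plane; the quotient
  map rho : R -> T is t |-> exp(2 pi i t) (surjective onto the circle, kernel Z),
  the group operation of T is complex multiplication (the neutral element 0 of
  R/Z corresponds to 1), and the topology is the subspace topology of C.\<close>

definition circleT :: "complex set" where
  "circleT = {z. norm z = 1}"

definition rho :: "real \<Rightarrow> complex" where
  "rho t = cis (2 * pi * t)"

definition Tplus :: "complex set" where
  "Tplus = rho ` {-1/4..1/4}"

text \<open>In Isabelle's filter order
  F \<le> G means F is finer than G, and sup F G is the filter of sets belonging to
  both F and G (the intersection of the two filters).\<close>

definition conv_group :: "('a::ab_group_add filter \<Rightarrow> 'a \<Rightarrow> bool) \<Rightarrow> bool" where
  "conv_group conv \<longleftrightarrow>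
     (\<forall>x. conv (principal {x}) x) \<and>
     (\<forall>F G x. conv F x \<and> conv G x \<longrightarrow> conv (sup F G) x) \<and>
     (\<forall>F G x. conv F x \<and> G \<le> F \<longrightarrow> conv G x) \<and>
     (\<forall>F G x y. conv F x \<and> conv G y \<longrightarrow>
        conv (filtermap (\<lambda>(a, b). a - b) (F \<times>\<^sub>F G)) (x - y))"

definition top_conv :: "'a topology \<Rightarrow> 'a filter \<Rightarrow> 'a \<Rightarrow> bool" where
  "top_conv T F x \<longleftrightarrow> limitin T (\<lambda>y. y) x F"

definition characters ::
  "('a::ab_group_add filter \<Rightarrow> 'a \<Rightarrow> bool) \<Rightarrow> ('a \<Rightarrow> complex) set" where
  "characters conv =
     {\<phi>. (\<forall>x. \<phi> x \<in> circleT) \<and> (\<forall>x y. \<phi> (x + y) = \<phi> x * \<phi> y) \<and>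
          (\<forall>F x. conv F x \<longrightarrow> (\<phi> \<longlongrightarrow> \<phi> x) F)}"

definition equicontinuous_set ::
  "('a::ab_group_add filter \<Rightarrow> 'a \<Rightarrow> bool) \<Rightarrow> ('a \<Rightarrow> complex) set \<Rightarrow> bool" where
  "equicontinuous_set conv M \<longleftrightarrow>
     M \<subseteq> characters conv \<and>
     (\<forall>F. conv F 0 \<longrightarrow>
        (\<forall>U. open U \<and> 1 \<in> U \<longrightarrow>
           (\<exists>A. eventually (\<lambda>x. x \<in> A) F \<and> {\<phi> x | \<phi> x. \<phi> \<in> M \<and> x \<in> A} \<subseteq> U)))"

definition group_topology :: "'a::ab_group_add topology \<Rightarrow> bool" where
  "group_topology T \<longleftrightarrow> topspace T = UNIV \<and>
     continuous_map (prod_topology T T) T (\<lambda>(x, y). x - y)"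

definition zero_nhd :: "'a::ab_group_add topology \<Rightarrow> 'a set \<Rightarrow> bool" where
  "zero_nhd T V \<longleftrightarrow> (\<exists>W. openin T W \<and> 0 \<in> W \<and> W \<subseteq> V)"

definition quasi_convex :: "'a::ab_group_add topology \<Rightarrow> 'a set \<Rightarrow> bool" where
  "quasi_convex T A \<longleftrightarrow>
     (\<forall>x. x \<notin> A \<longrightarrow>
        (\<exists>\<phi>\<in>characters (top_conv T). \<phi> ` A \<subseteq> Tplus \<and> \<phi> x \<notin> Tplus))"

definition locally_quasi_convex :: "'a::ab_group_add topology \<Rightarrow> bool" where
  "locally_quasi_convex T \<longleftrightarrow>
     (\<forall>U. zero_nhd T U \<longrightarrow> (\<exists>V. zero_nhd T V \<and> quasi_convex T V \<and> V \<subseteq> U))"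

definition coarser_than_conv ::
  "('a filter \<Rightarrow> 'a \<Rightarrow> bool) \<Rightarrow> 'a topology \<Rightarrow> bool" where
  "coarser_than_conv conv T \<longleftrightarrow> (\<forall>F x. conv F x \<longrightarrow> limitin T (\<lambda>y. y) x F)"

definition lqc_modification ::
  "('a::ab_group_add filter \<Rightarrow> 'a \<Rightarrow> bool) \<Rightarrow> 'a topology \<Rightarrow> bool" where
  "lqc_modification conv T \<longleftrightarrow>
     group_topology T \<and> locally_quasi_convex T \<and> coarser_than_conv conv T \<and>
     (\<forall>T'. group_topology T' \<and> locally_quasi_convex T' \<and> coarser_than_conv conv T'
           \<longrightarrow> (\<forall>U. openin T' U \<longrightarrow> openin T U))"

end

theory Submission
  imports Defs
begin

text \<open>
  One direction is monotonicity: the identity G -> tau(G) is continuous, so every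
  filter converging in G converges in tau(G), and equicontinuity with respect to the
  coarser convergence implies equicontinuity with respect to the finer one.

  For the converse let H be equicontinuous on G and consider the topology of uniform
  convergence on H, in which y is near x when all |phi y - phi x|, phi in H, are
  uniformly small.  It is a group topology; it is locally quasi-convex, because the
  quasi-convex sets {x. phi(x)^k in T+ for phi in H, 1 <= k <= n} form a base at 0;
  and equicontinuity of H says precisely that it is coarser than the convergence of G.
  By maximality of tau(G) it is coarser than tau(G), and H is trivially equicontinuous
  for it, hence H is equicontinuous on tau(G).
\<close>

lemma character_norm:
  assumes "\<phi> \<in> characters conv"
  shows "cmod (\<phi> x) = 1"
  using assms unfolding characters_def circleT_def by auto

lemma character_add:
  assumes "\<phi> \<in> characters conv"
  shows "\<phi> (x + y) = \<phi> x * \<phi> y"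
  using assms unfolding characters_def by auto

lemma character_zero:
  assumes "\<phi> \<in> characters conv"
  shows "\<phi> 0 = 1"
proof -
  have "\<phi> 0 * \<phi> 0 = \<phi> 0 * 1"
    using character_add[OF assms, of 0 0] by simp
  moreover have "\<phi> 0 \<noteq> 0"
    using character_norm[OF assms, of 0] by auto
  ultimately show ?thesis
    by (metis mult_left_cancel)
qed

lemma character_dist:
  assumes "\<phi> \<in> characters conv"
  shows "cmod (\<phi> y - \<phi> x) = cmod (\<phi> (y - x) - 1)"
proof -
  have "\<phi> y - \<phi> x = (\<phi> (y - x) - 1) * \<phi> x"
    using character_add[OF assms, of "y - x" x] by (simp add: algebra_simps)
  then show ?thesis
    using character_norm[OF assms, of x] by (simp add: norm_mult)
qed

lemma character_power:
  assumes "\<phi> \<in> characters conv"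
  shows "(\<lambda>x. \<phi> x ^ k) \<in> characters conv"
  using assms unfolding characters_def circleT_def
  by (auto simp: norm_power power_mult_distrib intro: tendsto_power)

lemma characters_antimono:
  assumes "\<And>F x. conv' F x \<Longrightarrow> conv F x"
  shows "characters conv \<subseteq> characters conv'"
  using assms unfolding characters_def by blast

section \<open>The arc T+ of the circle\<close>

text \<open>T+ is the closed right half of the unit circle.\<close>

lemma Re_nonneg_if_Tplus:
  assumes "w \<in> Tplus"
  shows "Re w \<ge> 0"
proof -
  obtain t where t: "-1/4 \<le> t" "t \<le> 1/4" and w: "w = cis (2 * pi * t)"
    using assms unfolding Tplus_def rho_def by auto
  have "2 * pi * (-1/4) \<le> 2 * pi * t"
    by (rule mult_left_mono) (use t pi_gt_zero in auto)
  moreover have "2 * pi * t \<le> 2 * pi * (1/4)"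
    by (rule mult_left_mono) (use t pi_gt_zero in auto)
  ultimately have "-(pi/2) \<le> 2 * pi * t" "2 * pi * t \<le> pi/2"
    by linarith+
  then show ?thesis
    using w cos_ge_zero by simp
qed

lemma Tplus_if_Re_pos:
  assumes "cmod w = 1" "Re w > 0"
  shows "w \<in> Tplus"
proof -
  define a where "a = Arg w"
  have "w \<noteq> 0"
    using assms(1) by auto
  then have w: "cis a = w"
    using cis_Arg[of w] assms(1) unfolding a_def by (simp add: sgn_eq)
  have a_bounds: "-pi < a" "a \<le> pi"
    using Arg_bounded unfolding a_def by auto
  have cos_pos: "cos a > 0"
    using assms(2) w by auto
  have "a \<le> pi/2"
  proof (rule ccontr)
    assume "\<not> a \<le> pi/2"
    then have "cos a < 0" using a_bounds by (intro cos_lt_zero_pi) auto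
    then show False using cos_pos by simp
  qed
  moreover have "-(pi/2) \<le> a"
  proof (rule ccontr)
    assume "\<not> -(pi/2) \<le> a"
    then have "cos (-a) < 0" using a_bounds by (intro cos_lt_zero_pi) auto
    then show False using cos_pos by simp
  qed
  ultimately have "a / (2*pi) \<in> {-1/4..1/4}"
    using pi_gt_zero by (auto simp: field_simps)
  moreover have "rho (a / (2*pi)) = w"
    unfolding rho_def using w by simp
  ultimately show ?thesis
    unfolding Tplus_def by (metis image_eqI)
qed

lemma Tplus_if_near_one:
  assumes "cmod z = 1" "cmod (z - 1) < 1"
  shows "z \<in> Tplus"
proof -
  have "\<bar>Re (z - 1)\<bar> < 1"
    using abs_Re_le_cmod[of "z - 1"] assms(2) by linarith
  then show ?thesis
    using Tplus_if_Re_pos assms(1) by simp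
qed

lemma norm_power_sub_one_le:
  assumes "cmod z = 1"
  shows "cmod (z ^ k - 1) \<le> real k * cmod (z - 1)"
proof (induction k)
  case 0
  then show ?case by simp
next
  case (Suc k)
  have "z ^ Suc k - 1 = z * (z ^ k - 1) + (z - 1)"
    by (simp add: algebra_simps)
  then have "cmod (z ^ Suc k - 1) \<le> cmod (z * (z ^ k - 1)) + cmod (z - 1)"
    by (metis norm_triangle_ineq)
  also have "cmod (z * (z ^ k - 1)) = cmod (z ^ k - 1)"
    using assms by (simp add: norm_mult)
  finally show ?case
    using Suc.IH by (simp add: algebra_simps)
qed

text \<open>If the angle a is not too small, the multiples k a, k = 1..n, cannot all stay in
  the right half plane: the first multiple beyond pi/2 still lies below pi.\<close>

lemma cos_multiple_neg:
  assumes "0 < a" "a \<le> pi" "pi < 2 * real n * a"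
  shows "\<exists>k\<in>{1..n}. cos (real k * a) < 0"
proof -
  define r where "r = pi / (2 * a)"
  define m where "m = nat \<lfloor>r\<rfloor>"
  have "r \<ge> 0"
    unfolding r_def using assms(1) by simp
  then have m: "real m \<le> r" "r < real m + 1"
    unfolding m_def by linarith+
  have "r < real n"
    unfolding r_def using assms by (simp add: divide_less_eq mult.commute mult.left_commute)
  then have "m + 1 \<in> {1..n}"
    using m by simp
  have above: "pi / 2 < real (m + 1) * a"
    using m(2) assms(1) unfolding r_def by (simp add: divide_less_eq algebra_simps)
  have "real m * a \<le> pi / 2"
    using m(1) assms(1) unfolding r_def by (simp add: le_divide_eq algebra_simps)
  have below: "real (m + 1) * a \<le> pi"
  proof (cases "m = 0")
    case True
    then show ?thesis using assms(2) by simp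
  next
    case False
    then have "1 * a \<le> real m * a"
      using assms(1) by (intro mult_right_mono) auto
    then show ?thesis
      using \<open>real m * a \<le> pi / 2\<close> by (simp add: algebra_simps)
  qed
  have "cos (real (m + 1) * a) < 0"
    using above below by (intro cos_lt_zero_pi) auto
  then show ?thesis
    using \<open>m + 1 \<in> {1..n}\<close> by blast
qed

text \<open>Hence a point of the circle whose first n powers lie in T+ is within
  angle pi/(2n) of 1; for large n it is as close to 1 as desired.\<close>

lemma near_one_if_powers_in_Tplus:
  assumes "e > 0"
  shows "\<exists>n\<ge>1. \<forall>z. cmod z = 1 \<and> (\<forall>k\<in>{1..n}. z ^ k \<in> Tplus) \<longrightarrow> cmod (z - 1) < e"
proof -
  have "continuous_on UNIV cis"
    by (intro continuous_intros)
  then have "isCont cis 0"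
    by (simp add: continuous_on_eq_continuous_at)
  then obtain d where d: "d > 0" "\<And>t. \<bar>t\<bar> < d \<Longrightarrow> cmod (cis t - 1) < e"
    using assms unfolding continuous_at_eps_delta by (fastforce simp: dist_norm)
  define n where "n = nat \<lceil>pi / (2 * d)\<rceil> + 1"
  have "n \<ge> 1"
    unfolding n_def by simp
  have "pi / (2 * d) < real n"
    unfolding n_def by linarith
  then have n_large: "pi < 2 * real n * d"
    using d(1) by (simp add: divide_less_eq mult.commute mult.left_commute)
  have "cmod (z - 1) < e" if z: "cmod z = 1" "\<forall>k\<in>{1..n}. z ^ k \<in> Tplus" for z
  proof -
    define \<theta> where "\<theta> = Arg z"
    have "z \<noteq> 0"
      using z(1) by auto
    then have z_cis: "cis \<theta> = z"
      using cis_Arg[of z] z(1) unfolding \<theta>_def by (simp add: sgn_eq)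
    have cos_nonneg: "cos (real k * \<bar>\<theta>\<bar>) \<ge> 0" if "k \<in> {1..n}" for k
    proof -
      have "Re (z ^ k) \<ge> 0"
        using z(2) that Re_nonneg_if_Tplus by blast
      moreover have "z ^ k = cis (real k * \<theta>)"
        using z_cis Complex.DeMoivre[of \<theta> k] by simp
      ultimately show ?thesis
        by (cases "\<theta> \<ge> 0") simp_all
    qed
    have "\<bar>\<theta>\<bar> \<le> pi"
      using Arg_bounded[of z] unfolding \<theta>_def by auto
    have "\<bar>\<theta>\<bar> < d"
    proof (rule ccontr)
      assume "\<not> \<bar>\<theta>\<bar> < d"
      then have "pi < 2 * real n * \<bar>\<theta>\<bar>"
        using n_large mult_left_mono[of d "\<bar>\<theta>\<bar>" "2 * real n"] by simp
      moreover have "0 < \<bar>\<theta>\<bar>"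
        using d(1) \<open>\<not> \<bar>\<theta>\<bar> < d\<close> by linarith
      ultimately obtain k where "k \<in> {1..n}" "cos (real k * \<bar>\<theta>\<bar>) < 0"
        using cos_multiple_neg \<open>\<bar>\<theta>\<bar> \<le> pi\<close> by blast
      then show False
        using cos_nonneg by fastforce
    qed
    then show ?thesis
      using d(2) z_cis by blast
  qed
  then show ?thesis
    using \<open>n \<ge> 1\<close> by blast
qed

section \<open>The topology of uniform convergence on a set of characters\<close>

definition unif_close :: "('a \<Rightarrow> complex) set \<Rightarrow> real \<Rightarrow> 'a \<Rightarrow> 'a \<Rightarrow> bool" where
  "unif_close H e x y \<longleftrightarrow> (\<forall>\<phi>\<in>H. cmod (\<phi> y - \<phi> x) \<le> e)"

text \<open>Open balls of the pseudometric d(x, y) = sup over phi in H of |phi y - phi x|,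
  described without forming the supremum: y is in the e-ball around x when x and y
  are d-close for some d < e.\<close>

definition unif_ball :: "('a \<Rightarrow> complex) set \<Rightarrow> 'a \<Rightarrow> real \<Rightarrow> 'a set" where
  "unif_ball H x e = {y. \<exists>d. 0 \<le> d \<and> d < e \<and> unif_close H d x y}"

definition unif_open :: "('a \<Rightarrow> complex) set \<Rightarrow> 'a set \<Rightarrow> bool" where
  "unif_open H U \<longleftrightarrow> (\<forall>x\<in>U. \<exists>e>0. unif_ball H x e \<subseteq> U)"

definition unif_topology :: "('a \<Rightarrow> complex) set \<Rightarrow> 'a topology" where
  "unif_topology H = topology (unif_open H)"

lemma unif_close_trans:
  assumes "unif_close H d x y" "unif_close H e y z"
  shows "unif_close H (d + e) x z"
  unfolding unif_close_def
proof
  fix \<phi> assume "\<phi> \<in> H"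
  then have "cmod (\<phi> z - \<phi> y) \<le> e" "cmod (\<phi> y - \<phi> x) \<le> d"
    using assms unfolding unif_close_def by auto
  then have "cmod (\<phi> z - \<phi> x) \<le> e + d"
    by (rule norm_diff_triangle_le)
  then show "cmod (\<phi> z - \<phi> x) \<le> d + e"
    by (simp add: add.commute)
qed

lemma unif_ballI:
  assumes "0 \<le> d" "d < e" "unif_close H d x y"
  shows "y \<in> unif_ball H x e"
  using assms unfolding unif_ball_def by blast

lemma unif_ballE:
  assumes "y \<in> unif_ball H x e"
  obtains d where "0 \<le> d" "d < e" "unif_close H d x y"
  using assms unfolding unif_ball_def by blast

lemma unif_ball_center: "e > 0 \<Longrightarrow> x \<in> unif_ball H x e"
  by (rule unif_ballI[of 0]) (simp_all add: unif_close_def)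

lemma unif_ball_mono: "d \<le> e \<Longrightarrow> unif_ball H x d \<subseteq> unif_ball H x e"
  by (auto elim!: unif_ballE intro!: unif_ballI)

lemma unif_close_if_unif_ball: "y \<in> unif_ball H x e \<Longrightarrow> unif_close H e x y"
  by (erule unif_ballE) (auto simp: unif_close_def)

lemma unif_open_ball: "unif_open H (unif_ball H x e)"
  unfolding unif_open_def
proof
  fix y assume "y \<in> unif_ball H x e"
  then obtain d where d: "0 \<le> d" "d < e" "unif_close H d x y"
    by (rule unif_ballE)
  have "unif_ball H y (e - d) \<subseteq> unif_ball H x e"
  proof
    fix z assume "z \<in> unif_ball H y (e - d)"
    then obtain d' where d': "0 \<le> d'" "d' < e - d" "unif_close H d' y z"
      by (rule unif_ballE)
    show "z \<in> unif_ball H x e"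
      by (rule unif_ballI[OF _ _ unif_close_trans[OF d(3) d'(3)]]) (use d d' in auto)
  qed
  then show "\<exists>e'>0. unif_ball H y e' \<subseteq> unif_ball H x e"
    using d(2) by (intro exI[of _ "e - d"]) auto
qed

lemma istopology_unif_open: "istopology (unif_open H)"
  unfolding istopology_def
proof (intro conjI allI impI)
  fix S T assume S: "unif_open H S" and T: "unif_open H T"
  show "unif_open H (S \<inter> T)"
    unfolding unif_open_def
  proof
    fix x assume "x \<in> S \<inter> T"
    then obtain d e where "d > 0" "unif_ball H x d \<subseteq> S" "e > 0" "unif_ball H x e \<subseteq> T"
      using S T unfolding unif_open_def by blast
    moreover have "unif_ball H x (min d e) \<subseteq> unif_ball H x d \<inter> unif_ball H x e"
      by (simp add: unif_ball_mono)
    ultimately show "\<exists>e>0. unif_ball H x e \<subseteq> S \<inter> T"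
      by (intro exI[of _ "min d e"]) auto
  qed
next
  fix K assume K: "\<forall>S\<in>K. unif_open H S"
  show "unif_open H (\<Union>K)"
    unfolding unif_open_def
  proof
    fix x assume "x \<in> \<Union>K"
    then obtain S where "S \<in> K" "x \<in> S"
      by blast
    then obtain e where "e > 0" "unif_ball H x e \<subseteq> S"
      using K unfolding unif_open_def by blast
    then show "\<exists>e>0. unif_ball H x e \<subseteq> \<Union>K"
      using \<open>S \<in> K\<close> by blast
  qed
qed

lemma openin_unif_topology: "openin (unif_topology H) U \<longleftrightarrow> unif_open H U"
  by (simp add: unif_topology_def istopology_unif_open)

lemma topspace_unif_topology [simp]: "topspace (unif_topology H) = UNIV"
proof -
  have "unif_open H UNIV"
    unfolding unif_open_def using zero_less_one by blast
  then show ?thesis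
    by (metis openin_unif_topology openin_subset top.extremum_uniqueI)
qed

lemma limitin_unif_topology:
  "limitin (unif_topology H) (\<lambda>y. y) x F \<longleftrightarrow> (\<forall>e>0. eventually (\<lambda>y. unif_close H e x y) F)"
proof
  assume lim: "limitin (unif_topology H) (\<lambda>y. y) x F"
  show "\<forall>e>0. eventually (\<lambda>y. unif_close H e x y) F"
  proof (intro allI impI)
    fix e :: real assume "e > 0"
    have lim_open: "\<forall>U. openin (unif_topology H) U \<and> x \<in> U \<longrightarrow> eventually (\<lambda>y. y \<in> U) F"
      using lim unfolding limitin_def by (rule conjunct2)
    have "openin (unif_topology H) (unif_ball H x e) \<and> x \<in> unif_ball H x e"
      by (simp add: openin_unif_topology unif_open_ball unif_ball_center \<open>e > 0\<close>)
    then have "eventually (\<lambda>y. y \<in> unif_ball H x e) F"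
      by (rule lim_open[rule_format])
    then show "eventually (\<lambda>y. unif_close H e x y) F"
      by (rule eventually_mono) (rule unif_close_if_unif_ball)
  qed
next
  assume close: "\<forall>e>0. eventually (\<lambda>y. unif_close H e x y) F"
  show "limitin (unif_topology H) (\<lambda>y. y) x F"
    unfolding limitin_def
  proof (intro conjI allI impI)
    show "x \<in> topspace (unif_topology H)"
      by simp
    fix U assume "openin (unif_topology H) U \<and> x \<in> U"
    then obtain e where "e > 0" and ball_U: "unif_ball H x e \<subseteq> U"
      unfolding openin_unif_topology unif_open_def by blast
    have in_U: "y \<in> U" if "unif_close H (e/2) x y" for y
    proof -
      have "y \<in> unif_ball H x e"
        by (rule unif_ballI[OF _ _ that]) (use \<open>e > 0\<close> in auto)
      then show ?thesis
        using ball_U by blast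
    qed
    have "eventually (\<lambda>y. unif_close H (e/2) x y) F"
      using close \<open>e > 0\<close> by simp
    then show "eventually (\<lambda>y. y \<in> U) F"
      by (rule eventually_mono) (rule in_U)
  qed
qed

lemma characters_unif_topology:
  assumes "H \<subseteq> characters conv"
  shows "H \<subseteq> characters (top_conv (unif_topology H))"
proof
  fix \<phi> assume "\<phi> \<in> H"
  have cont: "(\<phi> \<longlongrightarrow> \<phi> x) F" if "top_conv (unif_topology H) F x" for F x
  proof (rule tendstoI)
    fix e :: real assume "e > 0"
    then have "eventually (\<lambda>y. unif_close H (e/2) x y) F"
      using that unfolding top_conv_def limitin_unif_topology by simp
    then show "eventually (\<lambda>y. dist (\<phi> y) (\<phi> x) < e) F"
      by (rule eventually_mono) (use \<open>\<phi> \<in> H\<close> \<open>e > 0\<close> in \<open>auto simp: unif_close_def dist_norm\<close>)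
  qed
  have "\<phi> \<in> characters conv"
    using assms \<open>\<phi> \<in> H\<close> by blast
  then show "\<phi> \<in> characters (top_conv (unif_topology H))"
    using cont unfolding characters_def by blast
qed

lemma equicontinuous_unif_topology:
  assumes "H \<subseteq> characters conv"
  shows "equicontinuous_set (top_conv (unif_topology H)) H"
  unfolding equicontinuous_set_def
proof (intro conjI allI impI)
  show "H \<subseteq> characters (top_conv (unif_topology H))"
    using assms by (rule characters_unif_topology)
  fix F and U :: "complex set"
  assume F: "top_conv (unif_topology H) F 0" and U: "open U \<and> 1 \<in> U"
  then obtain e where "e > 0" "ball 1 e \<subseteq> U"
    using open_contains_ball by blast
  have "eventually (\<lambda>y. unif_close H (e/2) 0 y) F"
    using F \<open>e > 0\<close> unfolding top_conv_def limitin_unif_topology by simp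
  moreover have "{\<phi> x | \<phi> x. \<phi> \<in> H \<and> unif_close H (e/2) 0 x} \<subseteq> U"
  proof clarify
    fix \<phi> x assume "\<phi> \<in> H" "unif_close H (e/2) 0 x"
    moreover have "\<phi> 0 = 1"
      using assms \<open>\<phi> \<in> H\<close> character_zero by blast
    ultimately have "cmod (\<phi> x - 1) \<le> e/2"
      unfolding unif_close_def by force
    then show "\<phi> x \<in> U"
      using \<open>e > 0\<close> \<open>ball 1 e \<subseteq> U\<close> by (auto simp: dist_norm norm_minus_commute)
  qed
  ultimately show "\<exists>A. eventually (\<lambda>x. x \<in> A) F \<and> {\<phi> x | \<phi> x. \<phi> \<in> H \<and> x \<in> A} \<subseteq> U"
    by (intro exI[of _ "{x. unif_close H (e/2) 0 x}"]) simp
qed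

text \<open>Subtraction is uniformly continuous: if x is near a and y near b uniformly on H,
  then x - y is near a - b, as characters are isometric homomorphisms.\<close>

lemma unif_close_diff:
  assumes H: "H \<subseteq> characters conv" and "unif_close H d a x" "unif_close H e b y"
  shows "unif_close H (d + e) (a - b) (x - y)"
  unfolding unif_close_def
proof
  fix \<phi> assume "\<phi> \<in> H"
  then have \<phi>: "\<phi> \<in> characters conv"
    using H by blast
  have regroup: "(x - y) - (a - b) = (x - a) - (y - b)"
    by (simp add: algebra_simps)
  have "cmod (\<phi> (x - y) - \<phi> (a - b)) = cmod (\<phi> ((x - y) - (a - b)) - 1)"
    by (rule character_dist[OF \<phi>])
  also have "\<dots> = cmod (\<phi> ((x - a) - (y - b)) - 1)"
    by (simp only: regroup)
  also have "\<dots> = cmod (\<phi> (x - a) - \<phi> (y - b))"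
    by (rule character_dist[OF \<phi>, symmetric])
  also have "\<dots> \<le> cmod (\<phi> (x - a) - 1) + cmod (\<phi> (y - b) - 1)"
    using norm_triangle_ineq4[of "\<phi> (x - a) - 1" "\<phi> (y - b) - 1"] by simp
  also have "\<dots> = cmod (\<phi> x - \<phi> a) + cmod (\<phi> y - \<phi> b)"
    by (simp add: character_dist[OF \<phi>])
  also have "\<dots> \<le> d + e"
    using assms(2,3) \<open>\<phi> \<in> H\<close> unfolding unif_close_def by (simp add: add_mono)
  finally show "cmod (\<phi> (x - y) - \<phi> (a - b)) \<le> d + e" .
qed

lemma unif_ball_diff:
  assumes "H \<subseteq> characters conv" "x \<in> unif_ball H a d" "y \<in> unif_ball H b e"
  shows "x - y \<in> unif_ball H (a - b) (d + e)"
proof -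
  obtain d' where d': "0 \<le> d'" "d' < d" "unif_close H d' a x"
    using assms(2) by (rule unif_ballE)
  obtain e' where e': "0 \<le> e'" "e' < e" "unif_close H e' b y"
    using assms(3) by (rule unif_ballE)
  show ?thesis
    by (rule unif_ballI[OF _ _ unif_close_diff[OF assms(1) d'(3) e'(3)]]) (use d' e' in auto)
qed

lemma group_topology_unif_topology:
  assumes "H \<subseteq> characters conv"
  shows "group_topology (unif_topology H)"
proof -
  let ?X = "unif_topology H"
  have "openin (prod_topology ?X ?X) {p. (case p of (x, y) \<Rightarrow> x - y) \<in> U}"
    if U: "openin ?X U" for U
    unfolding openin_prod_topology_alt
  proof (intro allI impI)
    fix a b assume "(a, b) \<in> {p. (case p of (x, y) \<Rightarrow> x - y) \<in> U}"
    then obtain e where "e > 0" and ball_U: "unif_ball H (a - b) e \<subseteq> U"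
      using U unfolding openin_unif_topology unif_open_def by auto
    have "unif_ball H a (e/2) \<times> unif_ball H b (e/2) \<subseteq> {p. (case p of (x, y) \<Rightarrow> x - y) \<in> U}"
      using unif_ball_diff[OF assms, of _ a "e/2" _ b "e/2"] ball_U by auto
    then show "\<exists>V W. openin ?X V \<and> openin ?X W \<and> a \<in> V \<and> b \<in> W \<and>
        V \<times> W \<subseteq> {p. (case p of (x, y) \<Rightarrow> x - y) \<in> U}"
      using \<open>e > 0\<close> by (intro exI conjI) (auto simp: openin_unif_topology unif_open_ball unif_ball_center)
  qed
  then show ?thesis
    unfolding group_topology_def continuous_map_def by simp
qed

definition polar_powers :: "('a \<Rightarrow> complex) set \<Rightarrow> nat \<Rightarrow> 'a set" where
  "polar_powers H n = {x. \<forall>\<phi>\<in>H. \<forall>k\<in>{1..n}. \<phi> x ^ k \<in> Tplus}"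

lemma quasi_convex_polar_powers:
  assumes "H \<subseteq> characters (top_conv T)"
  shows "quasi_convex T (polar_powers H n)"
  unfolding quasi_convex_def
proof (intro allI impI)
  fix x assume "x \<notin> polar_powers H n"
  then obtain \<phi> k where "\<phi> \<in> H" "k \<in> {1..n}" "\<phi> x ^ k \<notin> Tplus"
    unfolding polar_powers_def by blast
  moreover have "(\<lambda>y. \<phi> y ^ k) \<in> characters (top_conv T)"
    using assms \<open>\<phi> \<in> H\<close> character_power by blast
  moreover have "(\<lambda>y. \<phi> y ^ k) ` polar_powers H n \<subseteq> Tplus"
    using \<open>\<phi> \<in> H\<close> \<open>k \<in> {1..n}\<close> unfolding polar_powers_def by blast
  ultimately show "\<exists>\<psi>\<in>characters (top_conv T). \<psi> ` polar_powers H n \<subseteq> Tplus \<and> \<psi> x \<notin> Tplus"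
    by blast
qed

lemma unif_ball_subset_polar_powers:
  assumes "H \<subseteq> characters conv"
  shows "unif_ball H 0 (1 / real n) \<subseteq> polar_powers H n"
proof
  fix x assume "x \<in> unif_ball H 0 (1 / real n)"
  then obtain d where d: "0 \<le> d" "d < 1 / real n" "unif_close H d 0 x"
    by (rule unif_ballE)
  show "x \<in> polar_powers H n"
    unfolding polar_powers_def
  proof (intro CollectI ballI)
    fix \<phi> k assume "\<phi> \<in> H" and k: "k \<in> {1..n}"
    then have \<phi>: "\<phi> \<in> characters conv"
      using assms by blast
    have "cmod (\<phi> x - 1) \<le> d"
      using d(3) \<open>\<phi> \<in> H\<close> character_zero[OF \<phi>] unfolding unif_close_def by force
    have "cmod (\<phi> x ^ k - 1) \<le> real k * cmod (\<phi> x - 1)"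
      by (rule norm_power_sub_one_le[OF character_norm[OF \<phi>]])
    also have "\<dots> \<le> real n * d"
      using \<open>cmod (\<phi> x - 1) \<le> d\<close> k d(1) by (intro mult_mono) auto
    also have "\<dots> < 1"
      using d(2) k by (simp add: field_simps)
    finally show "\<phi> x ^ k \<in> Tplus"
      using Tplus_if_near_one character_norm[OF \<phi>] by (simp add: norm_power)
  qed
qed

lemma polar_powers_subset_unif_ball:
  assumes "H \<subseteq> characters conv" "e > 0"
  obtains n where "n \<ge> 1" "polar_powers H n \<subseteq> unif_ball H 0 e"
proof -
  obtain n where "n \<ge> 1"
    and near: "\<And>z. cmod z = 1 \<Longrightarrow> \<forall>k\<in>{1..n}. z ^ k \<in> Tplus \<Longrightarrow> cmod (z - 1) < e/2"
    using near_one_if_powers_in_Tplus[of "e/2"] \<open>e > 0\<close> by auto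
  have "unif_close H (e/2) 0 x" if "x \<in> polar_powers H n" for x
    unfolding unif_close_def
  proof
    fix \<phi> assume "\<phi> \<in> H"
    then have \<phi>: "\<phi> \<in> characters conv"
      using assms by blast
    have "cmod (\<phi> x - 1) < e/2"
      using near[OF character_norm[OF \<phi>]] that \<open>\<phi> \<in> H\<close> unfolding polar_powers_def by blast
    then show "cmod (\<phi> x - \<phi> 0) \<le> e/2"
      using character_zero[OF \<phi>] by simp
  qed
  then have "polar_powers H n \<subseteq> unif_ball H 0 e"
    using \<open>e > 0\<close> by (auto intro!: unif_ballI[where d = "e/2"])
  with \<open>n \<ge> 1\<close> show ?thesis
    by (rule that)
qed

lemma locally_quasi_convex_unif_topology:
  assumes "H \<subseteq> characters conv"
  shows "locally_quasi_convex (unif_topology H)"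
  unfolding locally_quasi_convex_def
proof (intro allI impI)
  fix U assume "zero_nhd (unif_topology H) U"
  then obtain W where W: "unif_open H W" "0 \<in> W" "W \<subseteq> U"
    unfolding zero_nhd_def openin_unif_topology by blast
  then obtain e where "e > 0" "unif_ball H 0 e \<subseteq> W"
    unfolding unif_open_def by blast
  then obtain n where "n \<ge> 1" "polar_powers H n \<subseteq> unif_ball H 0 e"
    using polar_powers_subset_unif_ball[OF assms] by blast
  have "1 / real n > 0"
    using \<open>n \<ge> 1\<close> by simp
  then have "zero_nhd (unif_topology H) (polar_powers H n)"
    unfolding zero_nhd_def openin_unif_topology
    using unif_open_ball unif_ball_center[of "1 / real n"] unif_ball_subset_polar_powers[OF assms]
    by (intro exI[of _ "unif_ball H 0 (1 / real n)"]) auto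
  moreover have "quasi_convex (unif_topology H) (polar_powers H n)"
    by (rule quasi_convex_polar_powers[OF characters_unif_topology[OF assms]])
  ultimately show "\<exists>V. zero_nhd (unif_topology H) V \<and> quasi_convex (unif_topology H) V \<and> V \<subseteq> U"
    using \<open>polar_powers H n \<subseteq> unif_ball H 0 e\<close> \<open>unif_ball H 0 e \<subseteq> W\<close> W(3) by blast
qed

lemma conv_translate:
  assumes "conv_group conv" "conv F x"
  shows "conv (filtermap (\<lambda>a. a - x) F) 0"
proof -
  have "conv (filtermap (\<lambda>(a, b). a - b) (F \<times>\<^sub>F principal {x})) (x - x)"
    using assms unfolding conv_group_def by blast
  then show ?thesis
    by (simp add: prod_filter_principal_singleton2 filtermap_filtermap)
qed

lemma coarser_unif_topology:
  assumes "conv_group conv" "equicontinuous_set conv H"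
  shows "coarser_than_conv conv (unif_topology H)"
  unfolding coarser_than_conv_def limitin_unif_topology
proof (intro allI impI)
  fix F x and e :: real assume "conv F x" "e > 0"
  have H: "H \<subseteq> characters conv"
    using assms(2) unfolding equicontinuous_set_def by blast
  have "conv (filtermap (\<lambda>a. a - x) F) 0"
    using assms(1) \<open>conv F x\<close> by (rule conv_translate)
  moreover have "open (ball (1::complex) e) \<and> 1 \<in> ball (1::complex) e"
    using \<open>e > 0\<close> by simp
  ultimately obtain A where A: "eventually (\<lambda>a. a \<in> A) (filtermap (\<lambda>a. a - x) F)"
    and A_ball: "{\<phi> a | \<phi> a. \<phi> \<in> H \<and> a \<in> A} \<subseteq> ball 1 e"
    using assms(2) unfolding equicontinuous_set_def by blast
  have "unif_close H e x y" if "y - x \<in> A" for y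
    unfolding unif_close_def
  proof
    fix \<phi> assume "\<phi> \<in> H"
    then have "\<phi> (y - x) \<in> ball 1 e"
      using A_ball that by blast
    then have "cmod (\<phi> (y - x) - 1) < e"
      by (simp add: dist_norm norm_minus_commute)
    moreover have "cmod (\<phi> y - \<phi> x) = cmod (\<phi> (y - x) - 1)"
      using H \<open>\<phi> \<in> H\<close> by (intro character_dist) blast
    ultimately show "cmod (\<phi> y - \<phi> x) \<le> e"
      by simp
  qed
  moreover have "eventually (\<lambda>y. y - x \<in> A) F"
    using A by (simp add: eventually_filtermap)
  ultimately show "eventually (\<lambda>y. unif_close H e x y) F"
    by (auto elim: eventually_mono)
qed

lemma equicontinuous_antimono:
  assumes "\<And>F x. conv' F x \<Longrightarrow> conv F x" "equicontinuous_set conv H"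
  shows "equicontinuous_set conv' H"
proof -
  have "H \<subseteq> characters conv'"
    using assms(2) characters_antimono[of conv' conv, OF assms(1)]
    unfolding equicontinuous_set_def by blast
  then show ?thesis
    using assms unfolding equicontinuous_set_def by simp
qed

lemma lqc_modification_coarser:
  assumes "lqc_modification conv T" "conv F x"
  shows "top_conv T F x"
  using assms unfolding lqc_modification_def coarser_than_conv_def top_conv_def by blast

lemma lqc_modification_finest:
  assumes "lqc_modification conv T" "group_topology T'" "locally_quasi_convex T'"
    "coarser_than_conv conv T'" "top_conv T F x"
  shows "top_conv T' F x"
proof -
  have "\<And>U. openin T' U \<Longrightarrow> openin T U"
    using assms(1-4) unfolding lqc_modification_def by blast
  moreover have "topspace T' = UNIV"
    using assms(2) unfolding group_topology_def by blast
  ultimately show ?thesis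
    using assms(5) unfolding top_conv_def limitin_def by blast
qed

theorem proposition2p11:
  fixes conv :: "'a::ab_group_add filter \<Rightarrow> 'a \<Rightarrow> bool"
    and T :: "'a topology"
    and H :: "('a \<Rightarrow> complex) set"
  assumes "conv_group conv"
    and "lqc_modification conv T"
  shows "equicontinuous_set conv H \<longleftrightarrow> equicontinuous_set (top_conv T) H"
proof
  assume E: "equicontinuous_set conv H"
  then have H: "H \<subseteq> characters conv"
    unfolding equicontinuous_set_def by blast
  have "top_conv (unif_topology H) F x" if "top_conv T F x" for F x
    using lqc_modification_finest[OF assms(2) group_topology_unif_topology[OF H]
        locally_quasi_convex_unif_topology[OF H] coarser_unif_topology[OF assms(1) E] that] .
  then show "equicontinuous_set (top_conv T) H"
    using equicontinuous_unif_topology[OF H] by (rule equicontinuous_antimono)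
next
  assume "equicontinuous_set (top_conv T) H"
  with lqc_modification_coarser[OF assms(2)] show "equicontinuous_set conv H"
    by (rule equicontinuous_antimono)
qed

end
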